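(* Let $f\in\mathbb C[x_1,\dots,x_n]$ be a nonzero quasi-homogeneous polynomial of degree $d$ with weight vector $\mathbf v\in\mathbb R^n\setminus\{0\}$, i.e. $\langle\mathbf v,\gamma\rangle=d$ for all $\gamma\in\mathrm{Supp}(f)$. Then for every $\ell\in\mathbb Z$ and every $\omega=\lambda\mathbf v$ with $\lambda\in\mathbb R\setminus\{0\}$, $$b_{\mathrm{Ann}(f^\ell),\omega}(s)=s-\ell\lambda d.$$
   Context: $D_n$ is the $n$-th Weyl algebra ($\partial_ix_j=x_j\partial_i+\delta_{ij}$); ideals are left ideals. For $\omega\in\mathbb R^n$, the $(-\omega,\omega)$-weight of $x^\alpha\partial^\beta$ is $-\langle\omega,\alpha\rangle+\langle\omega,\beta\rangle$; $\mathrm{in}_{(-\omega,\omega)}(P)$ is the sum of the terms of maximal weight of the normally ordered expression of $P$, and $\mathrm{in}_{(-\omega,\omega)}(I)$ is the left ideal generated by the $\mathrm{in}_{(-\omega,\omega)}(P)$, $P\in I\setminus\{0\}$. For a holonomic ideal $I$ and $\omega\neq0$, with $s=\sum_i\omega_ix_i\partial_i$, the b-function $b_{I,\omega}(s)$ is the monic generator of $\mathrm{in}_{(-\omega,\omega)}(I)\cap\mathbb C[s]$ (standing assumption: $\mathrm{in}_{(-\omega,\omega)}(I)\neq D_n$). $\mathrm{Ann}(f^\ell)=\{P\in D_n:P\bullet f^\ell=0\}$ with $x_i\bullet g=x_ig$, $\partial_i\bullet g=\partial g/\partial x_i$. $\mathrm{Supp}(f)=\{\gamma:c_\gamma\ne0\}$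 for $f=\sum c_\gamma x^\gamma$. *)

theory Defs
  imports Complex_Main "HOL-Library.Poly_Mapping" "HOL-Computational_Algebra.Polynomial"
begin

text \<open>Multi-indices: finitely supported maps nat to nat (variable i is indexed by i < n).\<close>
type_synonym mindex = "nat \<Rightarrow>\<^sub>0 nat"

type_synonym mpoly = "mindex \<Rightarrow>\<^sub>0 complex"

text \<open>Elements of the Weyl algebra in normally ordered form:
  P = sum of c_(alpha,beta) x^alpha d^beta, encoded as (alpha,beta) to c.\<close>
type_synonym weyl = "(mindex \<times> mindex) \<Rightarrow>\<^sub>0 complex"

definition mindex_in :: "nat \<Rightarrow> mindex \<Rightarrow> bool" where
  "mindex_in n a \<longleftrightarrow> Poly_Mapping.keys a \<subseteq> {..<n}"

definition mpoly_in :: "nat \<Rightarrow> mpoly \<Rightarrow> bool" where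
  "mpoly_in n f \<longleftrightarrow> (\<forall>g\<in>Poly_Mapping.keys f. mindex_in n g)"

definition weyl_alg :: "nat \<Rightarrow> weyl set" where
  "weyl_alg n = {P. \<forall>(a,b)\<in>Poly_Mapping.keys P. mindex_in n a \<and> mindex_in n b}"

definition mindex_le :: "mindex \<Rightarrow> mindex \<Rightarrow> bool" where
  "mindex_le k b \<longleftrightarrow> (\<forall>i. Poly_Mapping.lookup k i \<le> Poly_Mapping.lookup b i)"

text \<open>Normal ordering of (x^a d^b)(x^c d^e):
  d^b x^c = sum over k of prod_i C(b_i,k_i) C(c_i,k_i) k_i! x^(c-k) d^(b-k).\<close>
definition weyl_mono_mult :: "mindex \<Rightarrow> mindex \<Rightarrow> mindex \<Rightarrow> mindex \<Rightarrow> weyl" where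
  "weyl_mono_mult a b c e =
     (\<Sum>k\<in>{k. mindex_le k b \<and> mindex_le k c}.
        Poly_Mapping.single (a + (c - k), (b - k) + e)
          (\<Prod>i\<in>Poly_Mapping.keys b. of_nat ((Poly_Mapping.lookup b i choose Poly_Mapping.lookup k i) * (Poly_Mapping.lookup c i choose Poly_Mapping.lookup k i)
                                   * fact (Poly_Mapping.lookup k i))))"

definition weyl_mult :: "weyl \<Rightarrow> weyl \<Rightarrow> weyl" where
  "weyl_mult P Q = (\<Sum>(a,b)\<in>Poly_Mapping.keys P. \<Sum>(c,e)\<in>Poly_Mapping.keys Q.
       Poly_Mapping.map (\<lambda>z. Poly_Mapping.lookup P (a,b) * Poly_Mapping.lookup Q (c,e) * z) (weyl_mono_mult a b c e))"

definition weyl_one :: weyl where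
  "weyl_one = Poly_Mapping.single (0,0) 1"

definition weyl_const :: "complex \<Rightarrow> weyl" where
  "weyl_const c = Poly_Mapping.single (0,0) c"

primrec weyl_pow :: "weyl \<Rightarrow> nat \<Rightarrow> weyl" where
  "weyl_pow P 0 = weyl_one"
| "weyl_pow P (Suc m) = weyl_mult P (weyl_pow P m)"

definition is_left_ideal :: "nat \<Rightarrow> weyl set \<Rightarrow> bool" where
  "is_left_ideal n I \<longleftrightarrow> I \<subseteq> weyl_alg n \<and> 0 \<in> I \<and> (\<forall>P\<in>I. \<forall>Q\<in>I. P + Q \<in> I)
     \<and> (\<forall>Q\<in>weyl_alg n. \<forall>P\<in>I. weyl_mult Q P \<in> I)"

definition left_ideal_gen :: "nat \<Rightarrow> weyl set \<Rightarrow> weyl set" where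
  "left_ideal_gen n S = \<Inter>{I. is_left_ideal n I \<and> S \<subseteq> I}"

definition weight :: "nat \<Rightarrow> (nat \<Rightarrow> real) \<Rightarrow> mindex \<times> mindex \<Rightarrow> real" where
  "weight n \<omega> ab = (\<Sum>i<n. - \<omega> i * real (Poly_Mapping.lookup (fst ab) i) + \<omega> i * real (Poly_Mapping.lookup (snd ab) i))"

definition initial_form :: "nat \<Rightarrow> (nat \<Rightarrow> real) \<Rightarrow> weyl \<Rightarrow> weyl" where
  "initial_form n \<omega> P =
     (let m = Max (weight n \<omega> ` Poly_Mapping.keys P)
      in \<Sum>ab\<in>{ab\<in>Poly_Mapping.keys P. weight n \<omega> ab = m}. Poly_Mapping.single ab (Poly_Mapping.lookup P ab))"

definition initial_ideal :: "nat \<Rightarrow> (nat \<Rightarrow> real) \<Rightarrow> weyl set \<Rightarrow> weyl set" where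
  "initial_ideal n \<omega> I = left_ideal_gen n {initial_form n \<omega> P | P. P \<in> I \<and> P \<noteq> 0}"

definition euler_s :: "nat \<Rightarrow> (nat \<Rightarrow> real) \<Rightarrow> weyl" where
  "euler_s n \<omega> = (\<Sum>i<n. Poly_Mapping.single (Poly_Mapping.single i 1, Poly_Mapping.single i 1)
                                              (complex_of_real (\<omega> i)))"

definition weyl_poly_eval :: "complex poly \<Rightarrow> weyl \<Rightarrow> weyl" where
  "weyl_poly_eval p S = (\<Sum>j\<le>degree p. weyl_mult (weyl_const (coeff p j)) (weyl_pow S j))"

definition b_function :: "nat \<Rightarrow> weyl set \<Rightarrow> (nat \<Rightarrow> real) \<Rightarrow> complex poly" where
  "b_function n I \<omega> = (THE b. lead_coeff b = 1 \<and>
      {p. weyl_poly_eval p (euler_s n \<omega>) \<in> initial_ideal n \<omega> I} = {p. b dvd p})"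

definition mpoly_deriv :: "nat \<Rightarrow> mpoly \<Rightarrow> mpoly" where
  "mpoly_deriv i g = (\<Sum>a\<in>Poly_Mapping.keys g. Poly_Mapping.single (a - Poly_Mapping.single i 1)
                                     (Poly_Mapping.lookup g a * of_nat (Poly_Mapping.lookup a i)))"

definition monom :: "mindex \<Rightarrow> mpoly" where
  "monom a = Poly_Mapping.single a 1"

text \<open>A pair (g, m) represents the rational function g * f^m; one derivation step d/dx_i:
  d_i (g f^m) = (f d_i g + m g d_i f) f^(m-1).\<close>
definition rat_deriv_step :: "mpoly \<Rightarrow> nat \<Rightarrow> mpoly \<times> int \<Rightarrow> mpoly \<times> int" where
  "rat_deriv_step f i gm = (f * mpoly_deriv i (fst gm) + of_int (snd gm) * fst gm * mpoly_deriv i f,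
                            snd gm - 1)"

definition rat_derivs :: "nat \<Rightarrow> mpoly \<Rightarrow> mindex \<Rightarrow> mpoly \<times> int \<Rightarrow> mpoly \<times> int" where
  "rat_derivs n f b gm = foldr (\<lambda>i. rat_deriv_step f i ^^ Poly_Mapping.lookup b i) [0..<n] gm"

definition mindex_size :: "mindex \<Rightarrow> nat" where
  "mindex_size b = (\<Sum>i\<in>Poly_Mapping.keys b. Poly_Mapping.lookup b i)"

text \<open>Annihilator of f^l (l an integer, f nonzero): P \<bullet> f^l = sum c_ab x^a g_b f^(l-|b|)
  where d^b (f^l) = g_b f^(l-|b|); this rational function vanishes iff, after multiplying by
  f^(N-l) for N \<ge> all |b|, the polynomial sum c_ab x^a g_b f^(N-|b|) vanishes.\<close>
definition ann_pow :: "nat \<Rightarrow> mpoly \<Rightarrow> int \<Rightarrow> weyl set" where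
  "ann_pow n f l = {P \<in> weyl_alg n. \<exists>N. (\<forall>(a,b)\<in>Poly_Mapping.keys P. mindex_size b \<le> N) \<and>
      (\<Sum>(a,b)\<in>Poly_Mapping.keys P. Poly_Mapping.single 0 (Poly_Mapping.lookup P (a,b)) * monom a
            * fst (rat_derivs n f b (1, l)) * f ^ (N - mindex_size b)) = 0}"

end

theory Submission
  imports Defs "HOL-Computational_Algebra.Field_as_Ring"
begin

(* By Euler's identity for the quasi-homogeneous f, the operator s - l lam d annihilates f^l.
   Its monomials 1 and x_i d_i all have (-omega,omega)-weight 0, so it is its own initial form
   and lies in the initial ideal J.  Modulo a left ideal containing s - c, every p(s) is congruent
   to the constant p(c); as J is proper, p(s) lies in J exactly when p(c) = 0, i.e. when s - c
   divides p, so s - c is the b-function. *)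

lemma sum_single_lookup:
  fixes p :: "'a \<Rightarrow>\<^sub>0 'b::comm_monoid_add"
  assumes "finite K" "Poly_Mapping.keys p \<subseteq> K"
  shows "(\<Sum>k\<in>K. Poly_Mapping.single k (Poly_Mapping.lookup p k)) = p"
proof (rule poly_mapping_eqI)
  fix x
  have "(\<Sum>k\<in>K. Poly_Mapping.lookup (Poly_Mapping.single k (Poly_Mapping.lookup p k)) x)
      = (\<Sum>k\<in>K. if k = x then Poly_Mapping.lookup p x else 0)"
    by (rule sum.cong) (auto simp: lookup_single when_def)
  also have "\<dots> = Poly_Mapping.lookup p x"
    using assms by (auto simp: in_keys_iff)
  finally show "Poly_Mapping.lookup (\<Sum>k\<in>K. Poly_Mapping.single k (Poly_Mapping.lookup p k)) x
      = Poly_Mapping.lookup p x"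
    by (simp add: lookup_sum)
qed

lemma single_sum: "Poly_Mapping.single k (sum g A) = (\<Sum>x\<in>A. Poly_Mapping.single k (g x))"
  by (induction A rule: infinite_finite_induct) (auto simp: single_add)

lemma single_eq_single_iff [simp]:
  "Poly_Mapping.single j a = Poly_Mapping.single i b \<longleftrightarrow> (j = i \<and> a = b) \<or> (a = 0 \<and> b = 0)"
  by (metis lookup_single_eq lookup_single_not_eq single_zero)

lemma single_eq_zero_iff [simp]: "Poly_Mapping.single k a = 0 \<longleftrightarrow> a = 0"
  by (metis lookup_single_eq lookup_zero single_zero)

lemma lookup_map_mult:
  "Poly_Mapping.lookup (Poly_Mapping.map (\<lambda>z. (c::'b::semiring_0) * z) p) k = c * Poly_Mapping.lookup p k"
  by (simp add: Poly_Mapping.map.rep_eq when_def)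

lemma lookup_sum_single_neq_zero:
  assumes "Poly_Mapping.lookup (\<Sum>k\<in>K. Poly_Mapping.single (h k) (g k)) x \<noteq> 0"
  shows "\<exists>k\<in>K. x = h k"
  using assms unfolding lookup_sum
  by (auto elim!: sum.not_neutral_contains_not_neutral simp: lookup_single when_def split: if_splits)

section \<open>Multiplication in the Weyl algebra\<close>

lemma lookup_weyl_mult:
  assumes "finite A" "Poly_Mapping.keys P \<subseteq> A" "finite B" "Poly_Mapping.keys Q \<subseteq> B"
  shows "Poly_Mapping.lookup (weyl_mult P Q) x =
    (\<Sum>ab\<in>A. \<Sum>ce\<in>B. Poly_Mapping.lookup P ab * Poly_Mapping.lookup Q ce *
        Poly_Mapping.lookup (weyl_mono_mult (fst ab) (snd ab) (fst ce) (snd ce)) x)"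
proof -
  have "Poly_Mapping.lookup (weyl_mult P Q) x =
    (\<Sum>ab\<in>Poly_Mapping.keys P. \<Sum>ce\<in>Poly_Mapping.keys Q. Poly_Mapping.lookup P ab * Poly_Mapping.lookup Q ce *
        Poly_Mapping.lookup (weyl_mono_mult (fst ab) (snd ab) (fst ce) (snd ce)) x)"
    unfolding weyl_mult_def by (simp add: lookup_sum split_def lookup_map_mult)
  also have "\<dots> = (\<Sum>ab\<in>A. \<Sum>ce\<in>Poly_Mapping.keys Q. Poly_Mapping.lookup P ab * Poly_Mapping.lookup Q ce *
        Poly_Mapping.lookup (weyl_mono_mult (fst ab) (snd ab) (fst ce) (snd ce)) x)"
    using assms by (intro sum.mono_neutral_left) (auto simp: in_keys_iff)
  also have "\<dots> = (\<Sum>ab\<in>A. \<Sum>ce\<in>B. Poly_Mapping.lookup P ab * Poly_Mapping.lookup Q ce *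
        Poly_Mapping.lookup (weyl_mono_mult (fst ab) (snd ab) (fst ce) (snd ce)) x)"
    using assms by (intro sum.cong refl sum.mono_neutral_left) (auto simp: in_keys_iff)
  finally show ?thesis .
qed

lemma weyl_mono_mult_0_left: "weyl_mono_mult 0 0 c e = Poly_Mapping.single (c, e) 1"
proof -
  have "{k. mindex_le k 0 \<and> mindex_le k c} = {0}"
    by (auto simp: mindex_le_def intro: poly_mapping_eqI)
  then show ?thesis unfolding weyl_mono_mult_def by simp
qed

lemma weyl_mono_mult_0_right: "weyl_mono_mult a b 0 0 = Poly_Mapping.single (a, b) 1"
proof -
  have "{k. mindex_le k b \<and> mindex_le k 0} = {0}"
    by (auto simp: mindex_le_def intro: poly_mapping_eqI)
  then show ?thesis unfolding weyl_mono_mult_def by simp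
qed

lemma keys_weyl_mono_mult:
  assumes "x \<in> Poly_Mapping.keys (weyl_mono_mult a b c e)"
  shows "\<exists>k. x = (a + (c - k), (b - k) + e)"
proof -
  have "Poly_Mapping.lookup (weyl_mono_mult a b c e) x \<noteq> 0"
    using assms by (simp add: in_keys_iff)
  then show ?thesis
    unfolding weyl_mono_mult_def
    by (auto dest: lookup_sum_single_neq_zero[where h = "\<lambda>k. (a + (c - k), (b - k) + e)"])
qed

lemma keys_weyl_const: "Poly_Mapping.keys (weyl_const c) \<subseteq> {(0,0)}"
  by (simp add: weyl_const_def)

lemma lookup_weyl_const: "Poly_Mapping.lookup (weyl_const c) x = (if x = (0,0) then c else 0)"
  by (simp add: weyl_const_def lookup_single when_def eq_commute)

lemma lookup_weyl_mult_const_left: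
  "Poly_Mapping.lookup (weyl_mult (weyl_const c) X) x = c * Poly_Mapping.lookup X x"
proof -
  have "Poly_Mapping.lookup (weyl_mult (weyl_const c) X) x =
     (\<Sum>ab\<in>{(0,0)}. \<Sum>ce\<in>Poly_Mapping.keys X. Poly_Mapping.lookup (weyl_const c) ab * Poly_Mapping.lookup X ce *
        Poly_Mapping.lookup (weyl_mono_mult (fst ab) (snd ab) (fst ce) (snd ce)) x)"
    by (rule lookup_weyl_mult) (auto simp: keys_weyl_const)
  also have "\<dots> = c * Poly_Mapping.lookup X x"
    by (simp add: lookup_weyl_const weyl_mono_mult_0_left lookup_single mult_when)
      (simp add: when_def in_keys_iff)
  finally show ?thesis .
qed

lemma lookup_weyl_mult_const_right:
  "Poly_Mapping.lookup (weyl_mult X (weyl_const c)) x = c * Poly_Mapping.lookup X x"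
proof -
  have "Poly_Mapping.lookup (weyl_mult X (weyl_const c)) x =
     (\<Sum>ab\<in>Poly_Mapping.keys X. \<Sum>ce\<in>{(0,0)}. Poly_Mapping.lookup X ab * Poly_Mapping.lookup (weyl_const c) ce *
        Poly_Mapping.lookup (weyl_mono_mult (fst ab) (snd ab) (fst ce) (snd ce)) x)"
    by (rule lookup_weyl_mult) (auto simp: keys_weyl_const)
  also have "\<dots> = c * Poly_Mapping.lookup X x"
    by (simp add: lookup_weyl_const weyl_mono_mult_0_right lookup_single mult_when)
      (simp add: when_def in_keys_iff)
  finally show ?thesis .
qed

lemma weyl_mult_add_right: "weyl_mult P (X + Y) = weyl_mult P X + weyl_mult P Y"
proof (rule poly_mapping_eqI)
  fix x
  define B where "B = Poly_Mapping.keys X \<union> Poly_Mapping.keys Y"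
  have keys_B: "Poly_Mapping.keys (X + Y) \<subseteq> B" "Poly_Mapping.keys X \<subseteq> B" "Poly_Mapping.keys Y \<subseteq> B"
    using keys_add[of X Y] by (auto simp: B_def)
  define m where "m = (\<lambda>ab ce. Poly_Mapping.lookup (weyl_mono_mult (fst ab) (snd ab) (fst ce) (snd ce)) x)"
  have expand: "Poly_Mapping.lookup (weyl_mult P Z) x =
      (\<Sum>ab\<in>Poly_Mapping.keys P. \<Sum>ce\<in>B. Poly_Mapping.lookup P ab * Poly_Mapping.lookup Z ce * m ab ce)"
    if "Poly_Mapping.keys Z \<subseteq> B" for Z
    unfolding m_def by (rule lookup_weyl_mult) (use that in \<open>auto simp: B_def\<close>)
  show "Poly_Mapping.lookup (weyl_mult P (X + Y)) x = Poly_Mapping.lookup (weyl_mult P X + weyl_mult P Y) x"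
    unfolding lookup_add expand[OF keys_B(1)] expand[OF keys_B(2)] expand[OF keys_B(3)] sum.distrib[symmetric]
    by (intro sum.cong refl) (simp add: lookup_add distrib_left distrib_right)
qed

lemma weyl_alg_mult:
  assumes P: "P \<in> weyl_alg n" and Q: "Q \<in> weyl_alg n"
  shows "weyl_mult P Q \<in> weyl_alg n"
  unfolding weyl_alg_def
proof clarsimp
  fix x y assume "(x, y) \<in> Poly_Mapping.keys (weyl_mult P Q)"
  then have "Poly_Mapping.lookup (weyl_mult P Q) (x, y) \<noteq> 0" by (simp add: in_keys_iff)
  then obtain ab ce where ab: "ab \<in> Poly_Mapping.keys P" and ce: "ce \<in> Poly_Mapping.keys Q"
    and "Poly_Mapping.lookup (weyl_mono_mult (fst ab) (snd ab) (fst ce) (snd ce)) (x,y) \<noteq> 0"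
    unfolding lookup_weyl_mult[OF finite_keys subset_refl finite_keys subset_refl]
    by (auto elim!: sum.not_neutral_contains_not_neutral)
  then obtain k where k: "(x,y) = (fst ab + (fst ce - k), (snd ab - k) + snd ce)"
    using keys_weyl_mono_mult by (blast intro: in_keys_iff[THEN iffD2])
  have keys_minus: "Poly_Mapping.keys (a - k) \<subseteq> Poly_Mapping.keys a" for a :: mindex
    by (auto simp: in_keys_iff lookup_minus)
  show "mindex_in n x \<and> mindex_in n y"
    using P Q ab ce k keys_add keys_minus unfolding weyl_alg_def mindex_in_def by fastforce
qed

lemma weyl_alg_add: "P \<in> weyl_alg n \<Longrightarrow> Q \<in> weyl_alg n \<Longrightarrow> P + Q \<in> weyl_alg n"
  using keys_add[of P Q] unfolding weyl_alg_def by blast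

lemma weyl_const_in_weyl_alg: "weyl_const c \<in> weyl_alg n"
  using keys_weyl_const[of c] by (auto simp: weyl_alg_def mindex_in_def)

lemma is_left_ideal_weyl_alg: "is_left_ideal n (weyl_alg n)"
  unfolding is_left_ideal_def by (auto simp: weyl_alg_add weyl_alg_mult) (simp add: weyl_alg_def)

lemma left_ideal_gen_subset_weyl_alg:
  assumes "S \<subseteq> weyl_alg n"
  shows "left_ideal_gen n S \<subseteq> weyl_alg n"
proof -
  have "weyl_alg n \<in> {I. is_left_ideal n I \<and> S \<subseteq> I}"
    using assms is_left_ideal_weyl_alg by auto
  then show ?thesis
    unfolding left_ideal_gen_def by blast
qed

lemma is_left_ideal_left_ideal_gen:
  assumes "S \<subseteq> weyl_alg n"
  shows "is_left_ideal n (left_ideal_gen n S)"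
  using left_ideal_gen_subset_weyl_alg[OF assms]
  unfolding is_left_ideal_def left_ideal_gen_def by (auto simp: is_left_ideal_def)

lemma generators_subset_left_ideal_gen: "S \<subseteq> left_ideal_gen n S"
  unfolding left_ideal_gen_def by blast

context
  fixes n :: nat and J :: "weyl set"
  assumes J: "is_left_ideal n J"
begin

lemma left_ideal_zero: "0 \<in> J"
  using J by (simp add: is_left_ideal_def)

lemma left_ideal_add: "X \<in> J \<Longrightarrow> Y \<in> J \<Longrightarrow> X + Y \<in> J"
  using J by (simp add: is_left_ideal_def)

lemma left_ideal_mult: "Q \<in> weyl_alg n \<Longrightarrow> X \<in> J \<Longrightarrow> weyl_mult Q X \<in> J"
  using J by (simp add: is_left_ideal_def)

lemma left_ideal_mult_const: "X \<in> J \<Longrightarrow> weyl_mult (weyl_const c) X \<in> J"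
  by (rule left_ideal_mult[OF weyl_const_in_weyl_alg])

lemma left_ideal_uminus: "X \<in> J \<Longrightarrow> - X \<in> J"
proof -
  have "weyl_mult (weyl_const (-1)) X = - X"
    by (rule poly_mapping_eqI) (simp add: lookup_weyl_mult_const_left)
  then show "X \<in> J \<Longrightarrow> - X \<in> J"
    using left_ideal_mult_const[of X "-1"] by simp
qed

lemma left_ideal_diff: "X \<in> J \<Longrightarrow> Y \<in> J \<Longrightarrow> X - Y \<in> J"
  using left_ideal_add[of X "- Y"] left_ideal_uminus[of Y] by simp

lemma left_ideal_sum: "(\<And>x. x \<in> A \<Longrightarrow> g x \<in> J) \<Longrightarrow> sum g A \<in> J"
  by (induction A rule: infinite_finite_induct) (auto intro: left_ideal_zero left_ideal_add)

lemma left_ideal_eq_weyl_alg_if_const: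
  assumes "weyl_const c \<in> J" and "c \<noteq> 0"
  shows "J = weyl_alg n"
proof
  show "J \<subseteq> weyl_alg n"
    using J by (simp add: is_left_ideal_def)
next
  have "weyl_mult (weyl_const (1 / c)) (weyl_const c) = weyl_const 1"
    by (rule poly_mapping_eqI) (simp add: lookup_weyl_mult_const_left lookup_weyl_const \<open>c \<noteq> 0\<close>)
  then have one: "weyl_const 1 \<in> J"
    using left_ideal_mult_const[OF \<open>weyl_const c \<in> J\<close>] by metis
  show "weyl_alg n \<subseteq> J"
  proof
    fix Q assume "Q \<in> weyl_alg n"
    moreover have "weyl_mult Q (weyl_const 1) = Q"
      by (rule poly_mapping_eqI) (simp add: lookup_weyl_mult_const_right)
    ultimately show "Q \<in> J"
      using left_ideal_mult[OF _ one] by metis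
  qed
qed

end

lemma keys_initial_form_subset: "Poly_Mapping.keys (initial_form n \<omega> P) \<subseteq> Poly_Mapping.keys P"
proof
  fix x assume "x \<in> Poly_Mapping.keys (initial_form n \<omega> P)"
  then have "Poly_Mapping.lookup (initial_form n \<omega> P) x \<noteq> 0" by (simp add: in_keys_iff)
  then show "x \<in> Poly_Mapping.keys P"
    unfolding initial_form_def Let_def by (auto dest: lookup_sum_single_neq_zero)
qed

lemma initial_form_in_weyl_alg: "P \<in> weyl_alg n \<Longrightarrow> initial_form n \<omega> P \<in> weyl_alg n"
  using keys_initial_form_subset[of n \<omega> P] by (auto simp: weyl_alg_def)

lemma is_left_ideal_initial_ideal:
  "I \<subseteq> weyl_alg n \<Longrightarrow> is_left_ideal n (initial_ideal n \<omega> I)"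
proof -
  assume "I \<subseteq> weyl_alg n"
  then have "{initial_form n \<omega> P | P. P \<in> I \<and> P \<noteq> 0} \<subseteq> weyl_alg n"
    using initial_form_in_weyl_alg by blast
  then show ?thesis
    unfolding initial_ideal_def by (rule is_left_ideal_left_ideal_gen)
qed

lemma initial_form_in_initial_ideal:
  "P \<in> I \<Longrightarrow> P \<noteq> 0 \<Longrightarrow> initial_form n \<omega> P \<in> initial_ideal n \<omega> I"
  unfolding initial_ideal_def by (rule subsetD[OF generators_subset_left_ideal_gen]) blast

lemma initial_form_eq_self:
  assumes "\<And>ab. ab \<in> Poly_Mapping.keys P \<Longrightarrow> weight n \<omega> ab = w"
  shows "initial_form n \<omega> P = P"
proof (cases "P = 0")
  case False
  then have "weight n \<omega> ` Poly_Mapping.keys P = {w}"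
    using assms by (metis keys_eq_empty image_constant_conv image_cong)
  then have "initial_form n \<omega> P = (\<Sum>ab\<in>Poly_Mapping.keys P. Poly_Mapping.single ab (Poly_Mapping.lookup P ab))"
    unfolding initial_form_def Let_def using assms by (intro sum.cong) auto
  also have "\<dots> = P"
    by (rule sum_single_lookup) auto
  finally show ?thesis .
qed (simp add: initial_form_def)

lemma weight_homogeneous_in_initial_ideal:
  assumes "I \<subseteq> weyl_alg n" and "P \<in> I" and "\<And>ab. ab \<in> Poly_Mapping.keys P \<Longrightarrow> weight n \<omega> ab = w"
  shows "P \<in> initial_ideal n \<omega> I"
proof (cases "P = 0")
  case True
  then show ?thesis
    using left_ideal_zero[OF is_left_ideal_initial_ideal[OF assms(1)]] by simp
next
  case False
  then show ?thesis
    using initial_form_in_initial_ideal[OF assms(2) False] initial_form_eq_self[OF assms(3)] by metis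
qed

section \<open>Polynomials in an operator that is a constant modulo a left ideal\<close>

lemma weyl_pow_minus_const_in_left_ideal:
  assumes J: "is_left_ideal n J" and S: "S \<in> weyl_alg n" and D: "S - weyl_const c \<in> J"
  shows "weyl_pow S j - weyl_const (c ^ j) \<in> J"
proof (induction j)
  case 0
  then show ?case
    using left_ideal_zero[OF J] by (simp add: weyl_one_def weyl_const_def)
next
  case (Suc j)
  define R where "R = weyl_pow S j - weyl_const (c ^ j)"
  have "weyl_pow S (Suc j) = weyl_mult S R + weyl_mult S (weyl_const (c ^ j))"
    by (simp add: R_def weyl_mult_add_right[symmetric])
  then have "weyl_pow S (Suc j) - weyl_const (c ^ Suc j)
      = weyl_mult S R + weyl_mult (weyl_const (c ^ j)) (S - weyl_const c)"
    by (intro poly_mapping_eqI) (simp add: lookup_add lookup_minus lookup_weyl_mult_const_right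
        lookup_weyl_mult_const_left lookup_weyl_const algebra_simps)
  moreover have "weyl_mult S R \<in> J"
    using left_ideal_mult[OF J S] Suc.IH by (simp add: R_def)
  ultimately show ?case
    using left_ideal_add[OF J] left_ideal_mult_const[OF J D] by simp
qed

lemma weyl_poly_eval_minus_const:
  "weyl_poly_eval p S - weyl_const (poly p c) =
    (\<Sum>j\<le>degree p. weyl_mult (weyl_const (coeff p j)) (weyl_pow S j - weyl_const (c ^ j)))"
proof (rule poly_mapping_eqI)
  fix x
  show "Poly_Mapping.lookup (weyl_poly_eval p S - weyl_const (poly p c)) x =
    Poly_Mapping.lookup (\<Sum>j\<le>degree p. weyl_mult (weyl_const (coeff p j)) (weyl_pow S j - weyl_const (c ^ j))) x"
    unfolding weyl_poly_eval_def lookup_minus lookup_sum lookup_weyl_mult_const_left lookup_weyl_const poly_altdef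
    by (simp add: algebra_simps sum_subtractf sum_distrib_right)
qed

lemma weyl_poly_eval_in_left_ideal_iff:
  assumes J: "is_left_ideal n J" and proper: "J \<noteq> weyl_alg n"
    and S: "S \<in> weyl_alg n" and D: "S - weyl_const c \<in> J"
  shows "weyl_poly_eval p S \<in> J \<longleftrightarrow> poly p c = 0"
proof -
  have diff: "weyl_poly_eval p S - weyl_const (poly p c) \<in> J"
    unfolding weyl_poly_eval_minus_const
    by (intro left_ideal_sum[OF J] left_ideal_mult_const[OF J] weyl_pow_minus_const_in_left_ideal[OF J S D])
  show ?thesis
  proof
    assume "weyl_poly_eval p S \<in> J"
    then have "weyl_poly_eval p S - (weyl_poly_eval p S - weyl_const (poly p c)) \<in> J"
      using left_ideal_diff[OF J _ diff] by blast
    then have "weyl_const (poly p c) \<in> J"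
      by simp
    then show "poly p c = 0"
      using left_ideal_eq_weyl_alg_if_const[OF J] proper by blast
  next
    assume "poly p c = 0"
    then show "weyl_poly_eval p S \<in> J"
      using diff by (simp add: weyl_const_def)
  qed
qed

lemma b_function_eqI:
  assumes "lead_coeff b = 1"
    and "{p. weyl_poly_eval p (euler_s n \<omega>) \<in> initial_ideal n \<omega> I} = {p. b dvd p}"
  shows "b_function n I \<omega> = b"
  unfolding b_function_def
proof (rule the_equality)
  fix b' assume b': "lead_coeff b' = 1 \<and> {p. weyl_poly_eval p (euler_s n \<omega>) \<in> initial_ideal n \<omega> I} = {p. b' dvd p}"
  then have "{p. b dvd p} = {p. b' dvd p}"
    using assms(2) by simp
  then have "b dvd b'" "b' dvd b"
    by (metis dvd_refl mem_Collect_eq)+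
  then have "normalize b' = normalize b"
    by (rule associatedI[rotated])
  then show "b' = b"
    using b' assms(1) by (simp add: normalize_poly_def one_pCons[symmetric])
qed (use assms in simp)

section \<open>The Euler operator\<close>

abbreviation mindex_var :: "nat \<Rightarrow> mindex" where
  "mindex_var i \<equiv> Poly_Mapping.single i 1"

lemma mindex_size_0: "mindex_size 0 = 0"
  by (simp add: mindex_size_def)

lemma mindex_size_single: "mindex_size (Poly_Mapping.single i k) = k"
  by (simp add: mindex_size_def)

lemma monom_var_mult_mpoly_deriv:
  "monom (mindex_var i) * mpoly_deriv i f =
     (\<Sum>a\<in>Poly_Mapping.keys f. Poly_Mapping.single a (Poly_Mapping.lookup f a * of_nat (Poly_Mapping.lookup a i)))"
  unfolding mpoly_deriv_def sum_distrib_left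
proof (rule sum.cong[OF refl])
  fix a
  show "monom (mindex_var i) * Poly_Mapping.single (a - mindex_var i) (Poly_Mapping.lookup f a * of_nat (Poly_Mapping.lookup a i)) =
    Poly_Mapping.single a (Poly_Mapping.lookup f a * of_nat (Poly_Mapping.lookup a i))"
  proof (cases "Poly_Mapping.lookup a i = 0")
    case False
    then have "mindex_var i + (a - mindex_var i) = a"
      by (intro poly_mapping_eqI) (auto simp: lookup_add lookup_minus lookup_single when_def)
    then show ?thesis
      by (simp add: monom_def mult_single)
  qed simp
qed

lemma euler_identity:
  assumes "\<forall>\<gamma>\<in>Poly_Mapping.keys f. (\<Sum>i<n. \<omega> i * real (Poly_Mapping.lookup \<gamma> i)) = e"
  shows "(\<Sum>i<n. Poly_Mapping.single 0 (complex_of_real (\<omega> i)) * (monom (mindex_var i) * mpoly_deriv i f))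
     = Poly_Mapping.single 0 (complex_of_real e) * f"
proof -
  have "(\<Sum>i<n. Poly_Mapping.single 0 (complex_of_real (\<omega> i)) * (monom (mindex_var i) * mpoly_deriv i f))
    = (\<Sum>i<n. \<Sum>a\<in>Poly_Mapping.keys f. Poly_Mapping.single a
         (complex_of_real (\<omega> i) * (Poly_Mapping.lookup f a * of_nat (Poly_Mapping.lookup a i))))"
    unfolding monom_var_mult_mpoly_deriv sum_distrib_left mult_single by simp
  also have "\<dots> = (\<Sum>a\<in>Poly_Mapping.keys f. \<Sum>i<n. Poly_Mapping.single a
         (complex_of_real (\<omega> i) * (Poly_Mapping.lookup f a * of_nat (Poly_Mapping.lookup a i))))"
    by (rule sum.swap)
  also have "\<dots> = (\<Sum>a\<in>Poly_Mapping.keys f. Poly_Mapping.single a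
         (Poly_Mapping.lookup f a * complex_of_real (\<Sum>i<n. \<omega> i * real (Poly_Mapping.lookup a i))))"
    unfolding single_sum[symmetric]
    by (intro sum.cong refl arg_cong[where f = "Poly_Mapping.single _"]) (simp add: sum_distrib_left algebra_simps)
  also have "\<dots> = (\<Sum>a\<in>Poly_Mapping.keys f. Poly_Mapping.single 0 (complex_of_real e) * Poly_Mapping.single a (Poly_Mapping.lookup f a))"
    using assms by (intro sum.cong refl) (simp add: mult_single mult.commute)
  also have "\<dots> = Poly_Mapping.single 0 (complex_of_real e) * f"
    unfolding sum_distrib_left[symmetric] by (simp add: sum_single_lookup)
  finally show ?thesis .
qed

lemma foldr_funpow_lookup_zero: "foldr (\<lambda>j. g j ^^ Poly_Mapping.lookup 0 j) xs x = x"
  by (induction xs) auto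

lemma foldr_funpow_lookup_single:
  "distinct xs \<Longrightarrow>
    foldr (\<lambda>j. g j ^^ Poly_Mapping.lookup (mindex_var i) j) xs x = (if i \<in> set xs then g i x else x)"
  by (induction xs) (auto simp: lookup_single when_def)

lemma rat_derivs_0: "rat_derivs n f 0 gm = gm"
  unfolding rat_derivs_def by (rule foldr_funpow_lookup_zero)

lemma rat_derivs_var: "i < n \<Longrightarrow> rat_derivs n f (mindex_var i) gm = rat_deriv_step f i gm"
  unfolding rat_derivs_def by (subst foldr_funpow_lookup_single) auto

lemma fst_rat_deriv_step_one: "fst (rat_deriv_step f i (1, l)) = of_int l * mpoly_deriv i f"
  by (simp add: rat_deriv_step_def mpoly_deriv_def)

lemma lookup_euler_s_var:
  assumes "i < n"
  shows "Poly_Mapping.lookup (euler_s n \<omega>) (mindex_var i, mindex_var i) = complex_of_real (\<omega> i)"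
proof -
  have "Poly_Mapping.lookup (euler_s n \<omega>) (mindex_var i, mindex_var i)
      = (\<Sum>j<n. if j = i then complex_of_real (\<omega> i) else 0)"
    unfolding euler_s_def lookup_sum
    by (intro sum.cong refl) (auto simp: lookup_single when_def )
  then show ?thesis
    using assms by simp
qed

lemma keys_euler_s:
  assumes "x \<in> Poly_Mapping.keys (euler_s n \<omega>)"
  shows "\<exists>i<n. x = (mindex_var i, mindex_var i)"
proof -
  have "Poly_Mapping.lookup (euler_s n \<omega>) x \<noteq> 0"
    using assms by (simp add: in_keys_iff)
  then have "\<exists>i\<in>{..<n}. x = (mindex_var i, mindex_var i)"
    unfolding euler_s_def by (rule lookup_sum_single_neq_zero)
  then show ?thesis
    by blast
qed

lemma lookup_euler_s_0: "Poly_Mapping.lookup (euler_s n \<omega>) (0, 0) = 0"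
  using keys_euler_s[of "(0,0)" n \<omega>] single_eq_zero_iff by (auto simp: in_keys_iff)

lemma keys_euler_s_minus_const:
  "x \<in> Poly_Mapping.keys (euler_s n \<omega> - weyl_const c) \<Longrightarrow> x = (0,0) \<or> (\<exists>i<n. x = (mindex_var i, mindex_var i))"
  using keys_euler_s[of x n \<omega>] by (auto simp: in_keys_iff lookup_minus lookup_weyl_const split: if_splits)

lemma euler_s_in_weyl_alg: "euler_s n \<omega> \<in> weyl_alg n"
  using keys_euler_s by (fastforce simp: weyl_alg_def mindex_in_def)

lemma euler_s_minus_const_in_weyl_alg: "euler_s n \<omega> - weyl_const c \<in> weyl_alg n"
  using keys_euler_s_minus_const by (fastforce simp: weyl_alg_def mindex_in_def)

lemma weight_keys_euler_s_minus_const: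
  "ab \<in> Poly_Mapping.keys (euler_s n \<omega> - weyl_const c) \<Longrightarrow> weight n \<omega>' ab = 0"
  using keys_euler_s_minus_const[of ab n \<omega> c] by (auto simp: weight_def)

lemma euler_s_minus_const_action:
  fixes n :: nat and \<omega> :: "nat \<Rightarrow> real" and c :: complex
  defines "P \<equiv> euler_s n \<omega> - weyl_const c"
  shows "(\<Sum>(a,b)\<in>Poly_Mapping.keys P. Poly_Mapping.single 0 (Poly_Mapping.lookup P (a,b)) * monom a
            * fst (rat_derivs n f b (1, l)) * f ^ (1 - mindex_size b))
       = of_int l * (\<Sum>i<n. Poly_Mapping.single 0 (complex_of_real (\<omega> i)) * (monom (mindex_var i) * mpoly_deriv i f))
         - Poly_Mapping.single 0 c * f"
proof -
  define T where "T = (\<lambda>(a,b). Poly_Mapping.single 0 (Poly_Mapping.lookup P (a,b)) * monom a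
            * fst (rat_derivs n f b (1, l)) * f ^ (1 - mindex_size b))"
  define diag where "diag = (\<lambda>i. (mindex_var i, mindex_var i))"
  have "Poly_Mapping.keys P \<subseteq> insert (0,0) (diag ` {..<n})"
    using keys_euler_s_minus_const by (fastforce simp: P_def diag_def)
  then have "sum T (Poly_Mapping.keys P) = sum T (insert (0,0) (diag ` {..<n}))"
    by (intro sum.mono_neutral_left) (auto simp: T_def in_keys_iff)
  also have "\<dots> = T (0,0) + (\<Sum>i<n. T (diag i))"
  proof -
    have "(0,0) \<notin> diag ` {..<n}" and "inj_on diag {..<n}"
      by (auto simp: diag_def inj_on_def)
    then show ?thesis
      by (simp add: sum.reindex)
  qed
  also have "T (0,0) = - Poly_Mapping.single 0 c * f"
    by (simp add: T_def P_def lookup_minus lookup_euler_s_0 lookup_weyl_const monom_def rat_derivs_0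
        mindex_size_0 single_uminus)
  also have "(\<Sum>i<n. T (diag i)) = of_int l *
      (\<Sum>i<n. Poly_Mapping.single 0 (complex_of_real (\<omega> i)) * (monom (mindex_var i) * mpoly_deriv i f))"
    unfolding sum_distrib_left
  proof (rule sum.cong[OF refl])
    fix i assume "i \<in> {..<n}"
    then have i: "i < n" by simp
    show "T (diag i) = of_int l *
        (Poly_Mapping.single 0 (complex_of_real (\<omega> i)) * (monom (mindex_var i) * mpoly_deriv i f))"
      unfolding T_def diag_def P_def prod.case lookup_minus lookup_euler_s_var[OF i] rat_derivs_var[OF i]
        fst_rat_deriv_step_one mindex_size_single
      by (simp add: lookup_weyl_const mult_ac)
  qed
  finally show ?thesis
    by (simp add: T_def)
qed

lemma euler_s_minus_const_in_ann_pow: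
  assumes "\<forall>\<gamma>\<in>Poly_Mapping.keys f. (\<Sum>i<n. \<omega> i * real (Poly_Mapping.lookup \<gamma> i)) = e"
  shows "euler_s n \<omega> - weyl_const (of_int l * complex_of_real e) \<in> ann_pow n f l"
proof -
  define P where "P = euler_s n \<omega> - weyl_const (of_int l * complex_of_real e)"
  have "\<forall>(a,b)\<in>Poly_Mapping.keys P. mindex_size b \<le> 1"
    using keys_euler_s_minus_const by (fastforce simp: P_def mindex_size_single mindex_size_0)
  moreover have "(\<Sum>(a,b)\<in>Poly_Mapping.keys P. Poly_Mapping.single 0 (Poly_Mapping.lookup P (a,b)) * monom a
            * fst (rat_derivs n f b (1, l)) * f ^ (1 - mindex_size b)) = 0"
    unfolding P_def euler_s_minus_const_action euler_identity[OF assms]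
    by (simp add: single_of_int[symmetric] mult_single del: single_of_int)
  ultimately show ?thesis
    unfolding ann_pow_def P_def using euler_s_minus_const_in_weyl_alg by blast
qed

lemma ann_pow_subset_weyl_alg: "ann_pow n f l \<subseteq> weyl_alg n"
  by (auto simp: ann_pow_def)

theorem mainTheorem8:
  fixes n :: nat and f :: mpoly and v :: "nat \<Rightarrow> real" and d :: real
    and l :: int and lam :: real
  assumes f_in: "mpoly_in n f"
    and f_nz: "f \<noteq> 0"
    and v_nz: "\<exists>i<n. v i \<noteq> 0"
    and qh: "\<forall>\<gamma>\<in>Poly_Mapping.keys f. (\<Sum>i<n. v i * real (Poly_Mapping.lookup \<gamma> i)) = d"
    and lam_nz: "lam \<noteq> 0"
    and proper: "initial_ideal n (\<lambda>i. lam * v i) (ann_pow n f l) \<noteq> weyl_alg n"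
  shows "b_function n (ann_pow n f l) (\<lambda>i. lam * v i) = [: - complex_of_real (real_of_int l * lam * d), 1 :]"
proof -
  define \<omega> where "\<omega> = (\<lambda>i. lam * v i)"
  define c where "c = complex_of_real (real_of_int l * lam * d)"
  define J where "J = initial_ideal n \<omega> (ann_pow n f l)"
  have "\<forall>\<gamma>\<in>Poly_Mapping.keys f. (\<Sum>i<n. \<omega> i * real (Poly_Mapping.lookup \<gamma> i)) = lam * d"
    using qh by (simp add: \<omega>_def mult.assoc sum_distrib_left[symmetric])
  from euler_s_minus_const_in_ann_pow[OF this, of l]
  have "euler_s n \<omega> - weyl_const c \<in> ann_pow n f l"
    by (simp add: c_def mult.assoc)
  then have "euler_s n \<omega> - weyl_const c \<in> J"
    unfolding J_def
    by (rule weight_homogeneous_in_initial_ideal[OF ann_pow_subset_weyl_alg _ weight_keys_euler_s_minus_const])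
  then have "weyl_poly_eval p (euler_s n \<omega>) \<in> J \<longleftrightarrow> [:-c, 1:] dvd p" for p
    using weyl_poly_eval_in_left_ideal_iff[OF is_left_ideal_initial_ideal[OF ann_pow_subset_weyl_alg] _ euler_s_in_weyl_alg]
      proper poly_eq_0_iff_dvd
    by (simp add: J_def \<omega>_def)
  then have "b_function n (ann_pow n f l) \<omega> = [:-c, 1:]"
    by (intro b_function_eqI) (simp_all add: J_def)
  then show ?thesis
    by (simp add: \<omega>_def c_def)
qed

end
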